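(* Let $\Gamma$ be a gain operator on $\ell^\infty_+(\mathcal I)$ and suppose there is a path $\sigma:\mathbb R_+\to\ell^\infty_+(\mathcal I)$ that is continuous (in norm) and satisfies: (i) there is $\tilde\rho\in\mathcal K_\infty$ with $\Gamma_{\tilde\rho}(\sigma(r))\le\sigma(r)$ for all $r\ge0$; (ii) there are $\varphi_{\min},\varphi_{\max}\in\mathcal K_\infty$ with $\varphi_{\min}(r)\mathbf 1\le\sigma(r)\le\varphi_{\max}(r)\mathbf 1$ for all $r\ge0$ ($\sigma$ need not be increasing; in particular this holds if $\Gamma$ admits a $C^0$-path of strict decay). Then there is $\rho\in\mathcal K_\infty$ such that (a) $\Sigma(\Gamma_\rho)$ is UGAS, and (b) $\Gamma_\rho$ satisfies the $\oplus$-MBI property.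
   Context: Let $\mathcal I$ be a nonempty countable index set; $\ell^\infty_+(\mathcal I)$ is the cone of nonnegative real families $s=(s_i)_{i\in\mathcal I}$ with $\|s\|:=\sup_i|s_i|<\infty$, ordered componentwise; $\mathbf 1$ is the all-ones vector; $\oplus$ is the componentwise maximum. $\mathcal K$: continuous strictly increasing $\gamma:\mathbb R_+\to\mathbb R_+$ with $\gamma(0)=0$; $\mathcal K_\infty$: unbounded elements of $\mathcal K$, acting on $\ell^\infty_+(\mathcal I)$ componentwise; $\mathcal{KL}$: continuous $\beta:\mathbb R_+^2\to\mathbb R_+$ with $\beta(\cdot,t)\in\mathcal K$ and $\beta(r,\cdot)$ continuous strictly decreasing to $0$ for $r>0$. For $\mathcal J\subset\mathcal I$, $s_{|\mathcal J}$ agrees with $s$ on $\mathcal J$ and is $0$ elsewhere. Gain operator: for each $i$ a finite (possibly empty) $\mathcal I_i\subset\mathcal I\setminus\{i\}$; directed graph $\mathcal G$ with vertices $\mathcal I$ and edges $ji$, $j\in\mathcal I_i$; a pointwise equicontinuous family $\gamma_{ij}\in\mathcal K_\infty$ ($ji\in E(\mathcal G)$); functions $\mu_i:\ell^\infty_+(\mathcal I)\to[0,\infty]$ with (M1) some $\xi\in\mathcal K_\infty$ has $\mu_i(0)=0$, $\mu_i(s)\ge\xi(\|s\|)$; (M2) $\mu_i$ monotone; (M3) for each finite $\mathcal J$, $\mu_i$ restricted to vectors vanishing off $\mathcal J$ is finite-valued and continuous; (M4) for each norm-bounded $A$ and $\varepsilon>0$ there is $\delta>0$ with $\sup_i|\mu_i(s_{|\mathcal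 I_i})-\mu_i(s^0_{|\mathcal I_i})|\le\varepsilon$ whenever $s^0\in A$, $\|s-s^0\|\le\delta$. $\Gamma_i(s):=\mu_i([\gamma_{ij}(s_j)]_{j\in\mathcal I_i})$ (argument zero outside $\mathcal I_i$). $\Gamma_\rho:=(\mathrm{id}+\rho)\circ\Gamma$. A $C^0$-path of strict decay is a path $\sigma$ satisfying (i), (ii) above, being increasing ($r_1\le r_2\Rightarrow\sigma(r_1)\le\sigma(r_2)$) and norm-continuous. $\Sigma(T)$ is the system $s^{n+1}=T(s^n)$; it is UGAS if $\|T^n(s)\|\le\beta(\|s\|,n)$ for some $\beta\in\mathcal{KL}$ and all $s,n$. A monotone $T$ has the $\oplus$-MBI property if there is $\varphi\in\mathcal K_\infty$ such that for all $s,b$, $s\le b\oplus T(s)$ implies $\|s\|\le\varphi(\|b\|)$. *)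

theory Defs
  imports "HOL-Analysis.Analysis" "HOL-Library.Countable"
begin

definition linf :: "('i \<Rightarrow> real) \<Rightarrow> bool" where
  "linf s \<longleftrightarrow> (\<forall>i. 0 \<le> s i) \<and> bdd_above (range (\<lambda>i. \<bar>s i\<bar>))"

definition nrm :: "('i \<Rightarrow> real) \<Rightarrow> real" where
  "nrm s = (SUP i. \<bar>s i\<bar>)"

definition classK :: "(real \<Rightarrow> real) \<Rightarrow> bool" where
  "classK g \<longleftrightarrow> continuous_on {0..} g \<and> strict_mono_on {0..} g \<and> g 0 = 0"

definition classKinf :: "(real \<Rightarrow> real) \<Rightarrow> bool" where
  "classKinf g \<longleftrightarrow> classK g \<and> (\<forall>M. \<exists>r\<ge>0. M < g r)"

definition classKL :: "(real \<Rightarrow> real \<Rightarrow> real) \<Rightarrow> bool" where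
  "classKL \<beta> \<longleftrightarrow> continuous_on ({0..} \<times> {0..}) (\<lambda>(r, t). \<beta> r t)
     \<and> (\<forall>t\<ge>0. classK (\<lambda>r. \<beta> r t))
     \<and> (\<forall>r>0. continuous_on {0..} (\<beta> r)
              \<and> (\<forall>t1 t2. 0 \<le> t1 \<longrightarrow> t1 < t2 \<longrightarrow> \<beta> r t2 < \<beta> r t1)
              \<and> ((\<beta> r) \<longlongrightarrow> 0) at_top)"

definition restr :: "('i \<Rightarrow> real) \<Rightarrow> 'i set \<Rightarrow> ('i \<Rightarrow> real)" where
  "restr s J = (\<lambda>i. if i \<in> J then s i else 0)"

text \<open>Gain operator data: Isub i = the finite in-neighbour set of i, gam i j = gamma_ij,
  mu i = mu_i (values in [0,infinity], modelled as ereal).\<close>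
definition gain_operator ::
  "('i \<Rightarrow> 'i set) \<Rightarrow> ('i \<Rightarrow> 'i \<Rightarrow> real \<Rightarrow> real) \<Rightarrow> ('i \<Rightarrow> ('i \<Rightarrow> real) \<Rightarrow> ereal) \<Rightarrow> bool" where
  "gain_operator Isub gam mu \<longleftrightarrow>
     (\<forall>i. finite (Isub i) \<and> i \<notin> Isub i)
   \<and> (\<forall>i. \<forall>j\<in>Isub i. classKinf (gam i j))
   \<and> (\<forall>r\<ge>0. \<forall>\<epsilon>>0. \<exists>\<delta>>0. \<forall>i. \<forall>j\<in>Isub i. \<forall>r'\<ge>0.
         \<bar>r' - r\<bar> < \<delta> \<longrightarrow> \<bar>gam i j r' - gam i j r\<bar> < \<epsilon>)
   \<and> (\<forall>i s. linf s \<longrightarrow> 0 \<le> mu i s)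
   \<and> (\<exists>\<xi>. classKinf \<xi> \<and> (\<forall>i. mu i (\<lambda>_. 0) = 0 \<and>
           (\<forall>s. linf s \<longrightarrow> ereal (\<xi> (nrm s)) \<le> mu i s)))
   \<and> (\<forall>i s s'. linf s \<and> linf s' \<and> (\<forall>j. s j \<le> s' j) \<longrightarrow> mu i s \<le> mu i s')
   \<and> (\<forall>i J. finite J \<longrightarrow>
        (\<forall>s. linf s \<and> (\<forall>j. j \<notin> J \<longrightarrow> s j = 0) \<longrightarrow> mu i s \<noteq> \<infinity>)
      \<and> (\<forall>s. linf s \<and> (\<forall>j. j \<notin> J \<longrightarrow> s j = 0) \<longrightarrow>
           (\<forall>\<epsilon>>0. \<exists>\<delta>>0. \<forall>s'. linf s' \<and> (\<forall>j. j \<notin> J \<longrightarrow> s' j = 0)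
               \<and> nrm (\<lambda>j. s' j - s j) < \<delta> \<longrightarrow>
               \<bar>real_of_ereal (mu i s') - real_of_ereal (mu i s)\<bar> < \<epsilon>)))
   \<and> (\<forall>A \<epsilon>. (\<forall>s\<in>A. linf s) \<and> (\<exists>R. \<forall>s\<in>A. nrm s \<le> R) \<and> \<epsilon> > 0 \<longrightarrow>
        (\<exists>\<delta>>0. \<forall>s0\<in>A. \<forall>s. linf s \<and> nrm (\<lambda>j. s j - s0 j) \<le> \<delta> \<longrightarrow>
           (\<forall>i. \<bar>real_of_ereal (mu i (restr s (Isub i)))
                 - real_of_ereal (mu i (restr s0 (Isub i)))\<bar> \<le> \<epsilon>)))"

text \<open>Gamma_i(s) = mu_i([gamma_ij(s_j)]_{j in I_i}); finite by (M3).\<close>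
definition Gamma ::
  "('i \<Rightarrow> 'i set) \<Rightarrow> ('i \<Rightarrow> 'i \<Rightarrow> real \<Rightarrow> real) \<Rightarrow> ('i \<Rightarrow> ('i \<Rightarrow> real) \<Rightarrow> ereal)
     \<Rightarrow> ('i \<Rightarrow> real) \<Rightarrow> ('i \<Rightarrow> real)" where
  "Gamma Isub gam mu s = (\<lambda>i. real_of_ereal
      (mu i (\<lambda>j. if j \<in> Isub i then gam i j (s j) else 0)))"

definition Gamma_rho ::
  "(real \<Rightarrow> real) \<Rightarrow> ('i \<Rightarrow> 'i set) \<Rightarrow> ('i \<Rightarrow> 'i \<Rightarrow> real \<Rightarrow> real)
     \<Rightarrow> ('i \<Rightarrow> ('i \<Rightarrow> real) \<Rightarrow> ereal) \<Rightarrow> ('i \<Rightarrow> real) \<Rightarrow> ('i \<Rightarrow> real)" where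
  "Gamma_rho \<rho> Isub gam mu s = (\<lambda>i. Gamma Isub gam mu s i + \<rho> (Gamma Isub gam mu s i))"

definition UGAS :: "(('i \<Rightarrow> real) \<Rightarrow> ('i \<Rightarrow> real)) \<Rightarrow> bool" where
  "UGAS T \<longleftrightarrow> (\<exists>\<beta>. classKL \<beta> \<and>
      (\<forall>s n. linf s \<longrightarrow> nrm ((T ^^ n) s) \<le> \<beta> (nrm s) (real n)))"

definition MBI :: "(('i \<Rightarrow> real) \<Rightarrow> ('i \<Rightarrow> real)) \<Rightarrow> bool" where
  "MBI T \<longleftrightarrow> (\<exists>\<phi>. classKinf \<phi> \<and>
      (\<forall>s b. linf s \<and> linf b \<and> (\<forall>i. s i \<le> max (b i) (T s i)) \<longrightarrow> nrm s \<le> \<phi> (nrm b)))"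

end

theory Submission
  imports Defs
begin

text \<open>Replacing \<rho>t by the smaller margin \<rho> = min (\<rho>t / 2) id turns the decay condition into a
  strict decrease \<Gamma>_\<rho> (\<sigma> r) \<le> \<sigma> r - c(r) with c positive for r > 0. Norm continuity of \<sigma>
  then yields a continuous, strictly increasing rate \<alpha> with \<alpha> r < r and
  \<sigma> r - c(r) \<le> \<sigma> (\<alpha> r), so by monotonicity every s \<le> \<sigma> r is driven below
  \<sigma> (\<alpha>^n r), and \<alpha>^n r \<rightarrow> 0; interpolating n \<mapsto> \<alpha>^n r linearly in n gives the KL bound.
  For the MBI property, s \<le> max b (\<Gamma>_\<rho> s) keeps s below \<sigma> (\<alpha> r) as long as \<alpha> r stays
  above R = \<phi>min\<inverse>(norm of b); as the rate satisfies r \<le> 2 \<alpha> r, this bounds the norm of s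
  by \<phi>max (2 R).\<close>

section \<open>Sup norm\<close>

definition bounded_fun :: "('i \<Rightarrow> real) \<Rightarrow> bool" where
  "bounded_fun f \<longleftrightarrow> bdd_above (range (\<lambda>i. \<bar>f i\<bar>))"

lemma bounded_funI: "(\<And>i. \<bar>f i\<bar> \<le> M) \<Longrightarrow> bounded_fun f"
  unfolding bounded_fun_def by (intro bdd_aboveI2) auto

lemma abs_le_nrm: "bounded_fun f \<Longrightarrow> \<bar>f i\<bar> \<le> nrm f"
  unfolding bounded_fun_def nrm_def by (rule cSUP_upper) auto

lemma nrm_least: "(\<And>i. \<bar>f i\<bar> \<le> M) \<Longrightarrow> nrm f \<le> M"
  unfolding nrm_def by (rule cSUP_least) auto

lemma nrm_nonneg: "bounded_fun f \<Longrightarrow> 0 \<le> nrm f"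
  using abs_le_nrm[of f undefined] by linarith

lemma linf_bounded_fun: "linf s \<Longrightarrow> bounded_fun s"
  unfolding linf_def bounded_fun_def by auto

lemma linf_nonneg: "linf s \<Longrightarrow> 0 \<le> s i"
  unfolding linf_def by auto

lemma linf_le_nrm: "linf s \<Longrightarrow> s i \<le> nrm s"
  using abs_le_nrm[OF linf_bounded_fun, of s i] by linarith

lemma linfI:
  assumes "\<And>i. 0 \<le> s i" and "\<And>i. s i \<le> M" shows "linf s"
proof -
  have "bounded_fun s" using assms by (intro bounded_funI[of s M]) (simp add: abs_le_iff)
  then show ?thesis using assms(1) unfolding linf_def bounded_fun_def by simp
qed

lemma nrm_le_bound:
  assumes "\<And>i. 0 \<le> s i" and "\<And>i. s i \<le> M" shows "nrm s \<le> M"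
  using assms by (intro nrm_least) (simp add: abs_le_iff)

lemma bounded_fun_diff:
  assumes "bounded_fun f" "bounded_fun g" shows "bounded_fun (\<lambda>i. f i - g i)"
proof (rule bounded_funI)
  fix i show "\<bar>f i - g i\<bar> \<le> nrm f + nrm g"
    using abs_le_nrm[OF assms(1), of i] abs_le_nrm[OF assms(2), of i] by linarith
qed

lemma nrm_diff_triangle:
  assumes "bounded_fun f" "bounded_fun g" "bounded_fun h"
  shows "nrm (\<lambda>i. f i - h i) \<le> nrm (\<lambda>i. f i - g i) + nrm (\<lambda>i. g i - h i)"
proof (rule nrm_least)
  fix i
  show "\<bar>f i - h i\<bar> \<le> nrm (\<lambda>i. f i - g i) + nrm (\<lambda>i. g i - h i)"
    using abs_le_nrm[OF bounded_fun_diff[OF assms(1,2)], of i]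
      abs_le_nrm[OF bounded_fun_diff[OF assms(2,3)], of i] by simp
qed

lemma nrm_diff_commute: "nrm (\<lambda>i. f i - g i) = nrm (\<lambda>i. g i - f i)"
  unfolding nrm_def by (simp add: abs_minus_commute)

section \<open>Comparison functions\<close>

lemma classK_nonneg: "classK g \<Longrightarrow> 0 \<le> x \<Longrightarrow> 0 \<le> g x"
  unfolding classK_def strict_mono_on_def
  by (metis atLeast_iff less_eq_real_def)

lemma classK_mono: "classK g \<Longrightarrow> 0 \<le> x \<Longrightarrow> x \<le> y \<Longrightarrow> g x \<le> g y"
  unfolding classK_def strict_mono_on_def
  by (metis atLeast_iff less_eq_real_def order_trans)

lemma classK_strict_mono: "classK g \<Longrightarrow> 0 \<le> x \<Longrightarrow> x < y \<Longrightarrow> g x < g y"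
  unfolding classK_def strict_mono_on_def by auto

lemma classK_pos: "classK g \<Longrightarrow> 0 < x \<Longrightarrow> 0 < g x"
  using classK_strict_mono[of g 0 x] unfolding classK_def by auto

lemma classK_continuous_on: "classK g \<Longrightarrow> continuous_on {0..} g"
  unfolding classK_def by auto

lemma classK_zero: "classK g \<Longrightarrow> g 0 = 0"
  unfolding classK_def by auto

lemma classKinf_classK: "classKinf g \<Longrightarrow> classK g"
  unfolding classKinf_def by auto

lemma classKinf_unbounded: "classKinf g \<Longrightarrow> \<exists>r\<ge>0. M < g r"
  unfolding classKinf_def by auto

lemma classK_iff_mono_le:
  assumes "classK g" "0 \<le> x" "0 \<le> y" shows "g x \<le> g y \<longleftrightarrow> x \<le> y"
  using classK_mono[OF assms(1)] classK_strict_mono[OF assms(1)] assms(2,3) by (meson not_le)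

lemma classK_compose:
  assumes g: "classK g" and h: "classK h" shows "classK (g \<circ> h)"
  unfolding classK_def
proof (intro conjI)
  have "h ` {0..} \<subseteq> {0..}" using classK_nonneg[OF h] by auto
  then show "continuous_on {0..} (g \<circ> h)"
    by (intro continuous_on_compose continuous_on_subset[OF classK_continuous_on[OF g]]
        classK_continuous_on[OF h])
  show "strict_mono_on {0..} (g \<circ> h)"
    by (rule strict_mono_onI) (auto intro: classK_strict_mono[OF g] classK_strict_mono[OF h] classK_nonneg[OF h])
  show "(g \<circ> h) 0 = 0" using g h by (simp add: classK_zero)
qed

lemma classKinf_compose:
  assumes g: "classKinf g" and h: "classKinf h" shows "classKinf (g \<circ> h)"
  unfolding classKinf_def
proof (intro conjI allI)
  show "classK (g \<circ> h)" using assms by (intro classK_compose classKinf_classK)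
  fix M
  obtain r where r: "0 \<le> r" "M < g r" using classKinf_unbounded[OF g] by blast
  obtain q where q: "0 \<le> q" "r < h q" using classKinf_unbounded[OF h] by blast
  have "g r \<le> g (h q)" using classK_mono[OF classKinf_classK[OF g] r(1)] q(2) by simp
  then show "\<exists>q\<ge>0. M < (g \<circ> h) q" using r q by auto
qed

lemma classKinf_id: "classKinf (\<lambda>x. x)"
  unfolding classKinf_def classK_def
proof (intro conjI allI)
  fix M :: real
  show "\<exists>r\<ge>0. M < r" by (rule exI[of _ "\<bar>M\<bar> + 1"]) simp
qed (auto intro: strict_mono_onI continuous_on_id)

lemma classKinf_min:
  assumes f: "classKinf f" and g: "classKinf g" shows "classKinf (\<lambda>x. min (f x) (g x))"
  unfolding classKinf_def classK_def
proof (intro conjI allI)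
  note fK = classKinf_classK[OF f] and gK = classKinf_classK[OF g]
  show "continuous_on {0..} (\<lambda>x. min (f x) (g x))"
    by (intro continuous_on_min classK_continuous_on fK gK)
  show "strict_mono_on {0..} (\<lambda>x. min (f x) (g x))"
    by (rule strict_mono_onI) (use classK_strict_mono[OF fK] classK_strict_mono[OF gK] in fastforce)
  show "min (f 0) (g 0) = 0" using fK gK by (simp add: classK_zero)
  fix M
  obtain r where r: "0 \<le> r" "M < f r" using classKinf_unbounded[OF f] by blast
  obtain q where q: "0 \<le> q" "M < g q" using classKinf_unbounded[OF g] by blast
  have "f r \<le> f (max r q)" "g q \<le> g (max r q)"
    using classK_mono[OF fK r(1)] classK_mono[OF gK q(1)] by simp_all
  then show "\<exists>x\<ge>0. M < min (f x) (g x)" using r q by (intro exI[of _ "max r q"]) auto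
qed

lemma classKinf_cmult:
  assumes c: "0 < c" and g: "classKinf g" shows "classKinf (\<lambda>x. c * g x)"
  unfolding classKinf_def classK_def
proof (intro conjI allI)
  note gK = classKinf_classK[OF g]
  show "continuous_on {0..} (\<lambda>x. c * g x)"
    by (intro continuous_on_mult_left classK_continuous_on gK)
  show "strict_mono_on {0..} (\<lambda>x. c * g x)"
    by (rule strict_mono_onI) (use c classK_strict_mono[OF gK] in auto)
  show "c * g 0 = 0" using gK by (simp add: classK_zero)
  fix M
  obtain r where "0 \<le> r" "M / c < g r" using classKinf_unbounded[OF g] by blast
  then show "\<exists>r\<ge>0. M < c * g r" using c by (auto simp: field_simps)
qed

definition Kinv :: "(real \<Rightarrow> real) \<Rightarrow> real \<Rightarrow> real" where
  "Kinv g y = (THE x. 0 \<le> x \<and> g x = y)"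

lemma classK_inj:
  "classK g \<Longrightarrow> 0 \<le> x \<Longrightarrow> 0 \<le> y \<Longrightarrow> g x = g y \<Longrightarrow> x = y"
  using classK_iff_mono_le[of g x y] classK_iff_mono_le[of g y x] by auto

lemma classKinf_surj:
  assumes g: "classKinf g" and y: "0 \<le> y" shows "\<exists>x\<ge>0. g x = y"
proof -
  note gK = classKinf_classK[OF g]
  obtain R where R: "0 \<le> R" "y < g R" using classKinf_unbounded[OF g] by blast
  have "\<exists>x. 0 \<le> x \<and> x \<le> R \<and> g x = y"
    by (rule IVT') (use y R classK_zero[OF gK] continuous_on_subset[OF classK_continuous_on[OF gK]] in auto)
  then show ?thesis by auto
qed

lemma Kinv:
  assumes g: "classKinf g" and y: "0 \<le> y" shows "0 \<le> Kinv g y" "g (Kinv g y) = y"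
proof -
  have "\<exists>!x. 0 \<le> x \<and> g x = y"
    using classKinf_surj[OF g y] classK_inj[OF classKinf_classK[OF g]] by blast
  then have "0 \<le> Kinv g y \<and> g (Kinv g y) = y" unfolding Kinv_def by (rule theI')
  then show "0 \<le> Kinv g y" "g (Kinv g y) = y" by auto
qed

lemma Kinv_apply: "classK g \<Longrightarrow> 0 \<le> x \<Longrightarrow> Kinv g (g x) = x"
  unfolding Kinv_def by (rule the_equality) (auto dest: classK_inj)

lemma classKinf_image_atLeastAtMost:
  assumes g: "classKinf g" and n: "0 \<le> n" shows "g ` {0..n} = {0..g n}"
proof
  note gK = classKinf_classK[OF g]
  show "g ` {0..n} \<subseteq> {0..g n}" using classK_nonneg[OF gK] classK_mono[OF gK] by auto
  show "{0..g n} \<subseteq> g ` {0..n}"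
  proof
    fix z assume z: "z \<in> {0..g n}"
    then have "Kinv g z \<le> n"
      using classK_iff_mono_le[OF gK Kinv(1)[OF g] n] Kinv(2)[OF g] by auto
    then show "z \<in> g ` {0..n}" using z Kinv[OF g] by (intro rev_image_eqI[of "Kinv g z"]) auto
  qed
qed

lemma Kinv_continuous_on:
  assumes g: "classKinf g" shows "continuous_on {0..} (Kinv g)"
proof (clarsimp simp: continuous_on_eq_continuous_within)
  note gK = classKinf_classK[OF g]
  fix y :: real assume y: "0 \<le> y"
  define n where "n = Kinv g y + 1"
  have n: "0 \<le> n" "y < g n"
    using Kinv[OF g y] classK_strict_mono[OF gK, of "Kinv g y" n] unfolding n_def by auto
  have "continuous_on (g ` {0..n}) (Kinv g)"
    by (rule continuous_on_inv)
       (use Kinv_apply[OF gK] continuous_on_subset[OF classK_continuous_on[OF gK]] in auto)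
  then have "continuous (at y within {0..g n}) (Kinv g)"
    using y n classKinf_image_atLeastAtMost[OF g n(1)]
    by (simp add: continuous_on_eq_continuous_within)
  moreover have "at y within {0..} = at y within {0..g n}"
    by (rule at_within_nhd[where S="{..<g n}"]) (use n in auto)
  ultimately show "continuous (at y within {0..}) (Kinv g)" by simp
qed

lemma classKinf_Kinv:
  assumes g: "classKinf g" shows "classKinf (Kinv g)"
  unfolding classKinf_def classK_def
proof (intro conjI allI)
  note gK = classKinf_classK[OF g]
  show "continuous_on {0..} (Kinv g)" by (rule Kinv_continuous_on[OF g])
  show "strict_mono_on {0..} (Kinv g)"
  proof (rule strict_mono_onI)
    fix x y :: real assume "x \<in> {0..}" "y \<in> {0..}" "x < y"
    then show "Kinv g x < Kinv g y"
      using classK_iff_mono_le[OF gK Kinv(1)[OF g] Kinv(1)[OF g], of y x] Kinv(2)[OF g] by auto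
  qed
  show "Kinv g 0 = 0" using Kinv_apply[OF gK, of 0] by (simp add: classK_zero[OF gK])
  show "\<exists>r\<ge>0. M < Kinv g r" for M
    using Kinv_apply[OF gK, of "\<bar>M\<bar> + 1"] classK_nonneg[OF gK, of "\<bar>M\<bar> + 1"]
    by (intro exI[of _ "g (\<bar>M\<bar> + 1)"]) auto
qed

section \<open>Interpolated iterates of a contraction\<close>

definition iter_interp :: "(real \<Rightarrow> real) \<Rightarrow> real \<Rightarrow> real \<Rightarrow> real" where
  "iter_interp f p t = (1 - frac t) * (f^^nat \<lfloor>t\<rfloor>) p + frac t * (f^^Suc (nat \<lfloor>t\<rfloor>)) p"

lemma iter_interp_of_nat: "iter_interp f p (real n) = (f^^n) p"
  unfolding iter_interp_def by (simp add: frac_def del: funpow.simps)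

lemma iter_interp_eq_hat_sum:
  assumes t: "0 \<le> t" "t < real N"
  shows "iter_interp f p t = (\<Sum>k\<le>N. max 0 (1 - \<bar>t - real k\<bar>) * (f^^k) p)"
proof -
  define j where "j = nat \<lfloor>t\<rfloor>"
  have jt: "real j \<le> t" "t < real j + 1" unfolding j_def using t by linarith+
  have jN: "Suc j \<le> N" using jt t by linarith
  have fr: "frac t = t - real j" unfolding frac_def j_def using t by simp
  have "max 0 (1 - \<bar>t - real k\<bar>) = 0" if "k \<notin> {j, Suc j}" for k
    using that jt by (cases "k < j") auto
  then have "(\<Sum>k\<le>N. max 0 (1 - \<bar>t - real k\<bar>) * (f^^k) p)
      = (\<Sum>k\<in>{j, Suc j}. max 0 (1 - \<bar>t - real k\<bar>) * (f^^k) p)"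
    by (intro sum.mono_neutral_right) (use jN in auto)
  also have "\<dots> = (1 - frac t) * (f^^j) p + frac t * (f^^Suc j) p"
    using jt unfolding fr by (simp del: funpow.simps)
  finally show ?thesis unfolding iter_interp_def j_def by simp
qed

context
  fixes f :: "real \<Rightarrow> real"
  assumes f_K: "classK f" and f_less: "\<And>r. 0 < r \<Longrightarrow> f r < r"
begin

lemma funpow_contraction_nonneg: "0 \<le> r \<Longrightarrow> 0 \<le> (f^^k) r"
  by (induction k) (auto intro: classK_nonneg[OF f_K])

lemma funpow_contraction_zero: "(f^^k) 0 = 0"
  by (induction k) (auto simp: classK_zero[OF f_K])

lemma funpow_contraction_pos: "0 < r \<Longrightarrow> 0 < (f^^k) r"
  by (induction k) (auto intro: classK_pos[OF f_K])

lemma funpow_contraction_strict_mono: "0 \<le> x \<Longrightarrow> x < y \<Longrightarrow> (f^^k) x < (f^^k) y"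
  by (induction k) (auto intro: classK_strict_mono[OF f_K] funpow_contraction_nonneg)

lemma funpow_contraction_mono: "0 \<le> x \<Longrightarrow> x \<le> y \<Longrightarrow> (f^^k) x \<le> (f^^k) y"
  using funpow_contraction_strict_mono[of x y k] by (cases "x = y") auto

lemma funpow_contraction_Suc_less: "0 < r \<Longrightarrow> (f^^Suc k) r < (f^^k) r"
  using f_less[OF funpow_contraction_pos] by simp

lemma funpow_contraction_antimono:
  assumes "0 \<le> r" "j \<le> k" shows "(f^^k) r \<le> (f^^j) r"
proof -
  have "decseq (\<lambda>k. (f^^k) r)"
  proof (rule decseq_SucI)
    fix k show "(f^^Suc k) r \<le> (f^^k) r"
      using funpow_contraction_Suc_less[of r k] assms(1) funpow_contraction_zero
      by (cases "r = 0") (auto simp del: funpow.simps)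
  qed
  then show ?thesis using assms(2) unfolding decseq_def by blast
qed

lemma funpow_contraction_continuous_on: "continuous_on {0..} (f^^k)"
proof (induction k)
  case (Suc k)
  have "(f^^k) ` {0..} \<subseteq> {0..}" using funpow_contraction_nonneg by auto
  then have "continuous_on {0..} (f \<circ> (f^^k))"
    by (intro continuous_on_compose Suc continuous_on_subset[OF classK_continuous_on[OF f_K]])
  then show ?case by simp
qed simp

lemma funpow_contraction_tendsto_zero:
  assumes r: "0 \<le> r" shows "(\<lambda>k. (f^^k) r) \<longlonglongrightarrow> 0"
proof -
  have dec: "decseq (\<lambda>k. (f^^k) r)"
    unfolding decseq_def using funpow_contraction_antimono[OF r] by blast
  obtain L where L: "(\<lambda>k. (f^^k) r) \<longlonglongrightarrow> L"
    using decseq_convergent[OF dec, of 0] funpow_contraction_nonneg[OF r] by blast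
  have L0: "0 \<le> L"
    by (rule LIMSEQ_le_const[OF L]) (use funpow_contraction_nonneg[OF r] in auto)
  have "(\<lambda>k. f ((f^^k) r)) \<longlonglongrightarrow> f L"
    by (rule continuous_on_tendsto_compose[OF classK_continuous_on[OF f_K] L])
       (use L0 funpow_contraction_nonneg[OF r] in auto)
  moreover have "(\<lambda>k. f ((f^^k) r)) \<longlonglongrightarrow> L"
    using LIMSEQ_Suc[OF L] by simp
  ultimately have "f L = L" using LIMSEQ_unique by blast
  then have "L = 0" using f_less[of L] L0 by fastforce
  then show ?thesis using L by simp
qed

lemma iter_interp_nonneg: "0 \<le> p \<Longrightarrow> 0 \<le> iter_interp f p t"
  unfolding iter_interp_def using frac_lt_1[of t] frac_ge_0[of t]
  by (intro add_nonneg_nonneg mult_nonneg_nonneg funpow_contraction_nonneg) auto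

lemma iter_interp_le_floor: "0 \<le> p \<Longrightarrow> iter_interp f p t \<le> (f^^nat \<lfloor>t\<rfloor>) p"
  using funpow_contraction_antimono[of p "nat \<lfloor>t\<rfloor>" "Suc (nat \<lfloor>t\<rfloor>)"]
    frac_ge_0[of t] frac_lt_1[of t]
  unfolding iter_interp_def by (simp add: convex_bound_le del: funpow.simps)

lemma iter_interp_gt_Suc_floor:
  assumes "0 < p" shows "(f^^Suc (nat \<lfloor>t\<rfloor>)) p < iter_interp f p t"
proof -
  define a b where "a = (f^^nat \<lfloor>t\<rfloor>) p" and "b = (f^^Suc (nat \<lfloor>t\<rfloor>)) p"
  have "0 < (1 - frac t) * (a - b)"
    using funpow_contraction_Suc_less[OF assms] frac_lt_1[of t] unfolding a_def b_def by simp
  moreover have "iter_interp f p t = b + (1 - frac t) * (a - b)"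
    unfolding iter_interp_def a_def b_def by (simp add: algebra_simps)
  ultimately show ?thesis unfolding b_def by simp
qed

lemma iter_interp_strict_mono:
  assumes "0 \<le> p" "p < q" shows "iter_interp f p t < iter_interp f q t"
proof -
  have "(1 - frac t) * (f^^nat \<lfloor>t\<rfloor>) p < (1 - frac t) * (f^^nat \<lfloor>t\<rfloor>) q"
    using funpow_contraction_strict_mono[OF assms] frac_lt_1[of t] by simp
  moreover have "frac t * (f^^Suc (nat \<lfloor>t\<rfloor>)) p \<le> frac t * (f^^Suc (nat \<lfloor>t\<rfloor>)) q"
    using funpow_contraction_mono[of p q] assms frac_ge_0[of t]
    by (intro mult_left_mono) (auto simp del: funpow.simps)
  ultimately show ?thesis unfolding iter_interp_def by linarith
qed

lemma iter_interp_strict_antimono: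
  assumes p: "0 < p" and t: "0 \<le> t1" "t1 < t2" shows "iter_interp f p t2 < iter_interp f p t1"
proof (cases "\<lfloor>t1\<rfloor> = \<lfloor>t2\<rfloor>")
  case True
  define a b where "a = (f^^nat \<lfloor>t1\<rfloor>) p" and "b = (f^^Suc (nat \<lfloor>t1\<rfloor>)) p"
  have "frac t1 < frac t2" unfolding frac_def using True t by simp
  then have "frac t1 * (a - b) < frac t2 * (a - b)"
    using funpow_contraction_Suc_less[OF p] unfolding a_def b_def by (intro mult_strict_right_mono) auto
  moreover have "iter_interp f p t = a - frac t * (a - b)" if "\<lfloor>t\<rfloor> = \<lfloor>t1\<rfloor>" for t
    using that unfolding iter_interp_def a_def b_def by (simp add: algebra_simps)
  ultimately show ?thesis using True by simp
next
  case False
  then have "Suc (nat \<lfloor>t1\<rfloor>) \<le> nat \<lfloor>t2\<rfloor>"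
    using floor_mono[of t1 t2] t by linarith
  then have "iter_interp f p t2 \<le> (f^^Suc (nat \<lfloor>t1\<rfloor>)) p"
    using iter_interp_le_floor[of p t2] funpow_contraction_antimono[of p] p by fastforce
  then show ?thesis using iter_interp_gt_Suc_floor[OF p, of t1] by linarith
qed

lemma iter_interp_tendsto_zero:
  assumes p: "0 \<le> p" shows "(iter_interp f p \<longlongrightarrow> 0) at_top"
proof (rule tendsto_sandwich[where f="\<lambda>_. 0" and h="\<lambda>t::real. (f^^nat \<lfloor>t\<rfloor>) p"])
  show "\<forall>\<^sub>F t in at_top. 0 \<le> iter_interp f p t"
    using iter_interp_nonneg[OF p] by simp
  show "\<forall>\<^sub>F t in at_top. iter_interp f p t \<le> (f^^nat \<lfloor>t\<rfloor>) p"
    using iter_interp_le_floor[OF p] by simp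
  have "filterlim (\<lambda>t::real. nat \<lfloor>t\<rfloor>) sequentially at_top"
    by (rule filterlim_compose[OF filterlim_nat_sequentially filterlim_floor_sequentially])
  from filterlim_compose[OF funpow_contraction_tendsto_zero[OF p] this]
  show "((\<lambda>t::real. (f^^nat \<lfloor>t\<rfloor>) p) \<longlongrightarrow> 0) at_top" by simp
qed simp

lemma iter_interp_continuous_on: "continuous_on ({0..} \<times> {0..}) (\<lambda>(p, t). iter_interp f p t)"
proof -
  define F where "F x = iter_interp f (max 0 (fst x)) (max 0 (snd x))" for x :: "real \<times> real"
  define A where "A N = (UNIV :: real set) \<times> {..<real N}" for N
  have "continuous_on (A N) F" for N
  proof -
    have "continuous_on UNIV (\<lambda>x::real \<times> real. (f^^k) (max 0 (fst x)))" for k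
      by (intro continuous_on_compose2[OF funpow_contraction_continuous_on] continuous_intros) auto
    then have "continuous_on (A N)
        (\<lambda>x. \<Sum>k\<le>Suc N. max 0 (1 - \<bar>max 0 (snd x) - real k\<bar>) * (f^^k) (max 0 (fst x)))"
      by (intro continuous_intros) (auto intro: continuous_on_subset)
    moreover have "(\<Sum>k\<le>Suc N. max 0 (1 - \<bar>max 0 (snd x) - real k\<bar>) * (f^^k) (max 0 (fst x))) = F x"
      if "x \<in> A N" for x
      unfolding F_def using that by (intro iter_interp_eq_hat_sum[symmetric]) (auto simp: A_def)
    ultimately show ?thesis by (rule continuous_on_eq)
  qed
  then have "continuous_on (\<Union>N. A N) F"
    by (intro continuous_on_open_UN) (simp_all add: A_def open_Times)
  moreover have "(\<Union>N. A N) = UNIV"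
    unfolding A_def using reals_Archimedean2 by fastforce
  ultimately have "continuous_on ({0..} \<times> {0..}) F" by (auto intro: continuous_on_subset)
  then show ?thesis by (rule continuous_on_eq) (auto simp: F_def)
qed

lemma classKL_iter_interp: "classKL (iter_interp f)"
  unfolding classKL_def
proof (intro conjI allI impI)
  show "continuous_on ({0..} \<times> {0..}) (\<lambda>(r, t). iter_interp f r t)"
    by (rule iter_interp_continuous_on)
  fix t :: real assume t: "0 \<le> t"
  show "classK (\<lambda>r. iter_interp f r t)"
    unfolding classK_def
  proof (intro conjI)
    have "continuous_on {0..} (\<lambda>r. (\<lambda>(p, t). iter_interp f p t) (r, t))"
      by (rule continuous_on_compose2[OF iter_interp_continuous_on]) (use t in \<open>auto intro: continuous_on_Pair\<close>)
    then show "continuous_on {0..} (\<lambda>r. iter_interp f r t)" by simp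
    show "strict_mono_on {0..} (\<lambda>r. iter_interp f r t)"
      by (rule strict_mono_onI) (auto intro: iter_interp_strict_mono)
    show "iter_interp f 0 t = 0"
      unfolding iter_interp_def by (simp add: funpow_contraction_zero del: funpow.simps)
  qed
next
  fix r :: real assume r: "0 < r"
  have "continuous_on {0..} (\<lambda>t. (\<lambda>(p, t). iter_interp f p t) (r, t))"
    by (rule continuous_on_compose2[OF iter_interp_continuous_on]) (use r in \<open>auto intro: continuous_on_Pair\<close>)
  then show "continuous_on {0..} (iter_interp f r)" by simp
  show "iter_interp f r t2 < iter_interp f r t1" if "0 \<le> t1" "t1 < t2" for t1 t2
    using iter_interp_strict_antimono[OF r that] .
  show "(iter_interp f r \<longlongrightarrow> 0) at_top"
    using iter_interp_tendsto_zero r by simp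
qed

end

lemma classKL_compose:
  assumes g: "classK g" and \<beta>: "classKL \<beta>" and h: "classK h"
  shows "classKL (\<lambda>r t. g (\<beta> (h r) t))"
proof -
  have joint: "continuous_on ({0..} \<times> {0..}) (\<lambda>(r, t). \<beta> r t)"
    and sect: "\<And>t. 0 \<le> t \<Longrightarrow> classK (\<lambda>r. \<beta> r t)"
    and cont: "\<And>r. 0 < r \<Longrightarrow> continuous_on {0..} (\<beta> r)"
    and dec: "\<And>r t1 t2. 0 < r \<Longrightarrow> 0 \<le> t1 \<Longrightarrow> t1 < t2 \<Longrightarrow> \<beta> r t2 < \<beta> r t1"
    and lim: "\<And>r. 0 < r \<Longrightarrow> (\<beta> r \<longlongrightarrow> 0) at_top"
    using \<beta> unfolding classKL_def by auto
  have \<beta>_nonneg: "0 \<le> \<beta> r t" if "0 \<le> r" "0 \<le> t" for r t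
    using classK_nonneg[OF sect] that by blast
  note gc = classK_continuous_on[OF g]
  show ?thesis
    unfolding classKL_def
  proof (intro conjI allI impI)
    have "continuous_on ({0..} \<times> {0..}) (\<lambda>x. (h (fst x), snd x))"
      by (intro continuous_on_Pair continuous_on_compose2[OF classK_continuous_on[OF h]]
          continuous_on_fst continuous_on_snd continuous_on_id) auto
    then have "continuous_on ({0..} \<times> {0..}) (\<lambda>x. (\<lambda>(r, t). \<beta> r t) (h (fst x), snd x))"
      by (rule continuous_on_compose2[OF joint]) (auto intro: classK_nonneg[OF h])
    then have "continuous_on ({0..} \<times> {0..}) (\<lambda>x. g ((\<lambda>(r, t). \<beta> r t) (h (fst x), snd x)))"
      by (rule continuous_on_compose2[OF gc]) (auto intro!: \<beta>_nonneg classK_nonneg[OF h])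
    then show "continuous_on ({0..} \<times> {0..}) (\<lambda>(r, t). g (\<beta> (h r) t))"
      by (simp add: case_prod_beta')
  next
    fix t :: real assume "0 \<le> t"
    then have "classK (g \<circ> (\<lambda>r. \<beta> r t) \<circ> h)"
      by (intro classK_compose g h sect)
    then show "classK (\<lambda>r. g (\<beta> (h r) t))" by (simp add: comp_def)
  next
    fix r :: real assume "0 < r"
    then have hr: "0 < h r" by (rule classK_pos[OF h])
    show "continuous_on {0..} (\<lambda>t. g (\<beta> (h r) t))"
      by (rule continuous_on_compose2[OF gc cont[OF hr]]) (auto intro: \<beta>_nonneg less_imp_le[OF hr])
    show "g (\<beta> (h r) t2) < g (\<beta> (h r) t1)" if "0 \<le> t1" "t1 < t2" for t1 t2
      using that hr by (intro classK_strict_mono[OF g] dec \<beta>_nonneg) auto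
    have "((\<lambda>t. g (\<beta> (h r) t)) \<longlongrightarrow> g 0) at_top"
      by (rule continuous_on_tendsto_compose[OF gc lim[OF hr]])
         (use hr \<beta>_nonneg in \<open>auto intro: eventually_at_top_linorderI[of 0]\<close>)
    then show "((\<lambda>t. g (\<beta> (h r) t)) \<longlongrightarrow> 0) at_top" by (simp add: classK_zero[OF g])
  qed
qed

section \<open>Contraction rate of a norm-continuous path\<close>

context
  fixes \<sigma> :: "real \<Rightarrow> 'i \<Rightarrow> real" and c :: "real \<Rightarrow> real"
  assumes path_bounded: "\<And>r. 0 \<le> r \<Longrightarrow> bounded_fun (\<sigma> r)"
    and path_continuous: "\<forall>r\<ge>0. \<forall>\<epsilon>>0. \<exists>\<delta>>0. \<forall>r'\<ge>0.
                            \<bar>r' - r\<bar> < \<delta> \<longrightarrow> nrm (\<lambda>i. \<sigma> r' i - \<sigma> r i) < \<epsilon>"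
    and c_nonneg: "\<And>r. 0 \<le> r \<Longrightarrow> 0 \<le> c r"
    and c_pos: "\<And>r. 0 < r \<Longrightarrow> 0 < c r"
    and c_mono: "mono_on {0..} c"
begin

definition descent_window :: "real \<Rightarrow> real \<Rightarrow> bool" where
  "descent_window q h \<longleftrightarrow> 0 \<le> h \<and> h \<le> q \<and>
     (\<forall>r i. q - h \<le> r \<and> r \<le> q \<longrightarrow> \<sigma> q i - c q \<le> \<sigma> r i)"

definition max_descent_window :: "real \<Rightarrow> real" where
  "max_descent_window q = Sup {h. descent_window q h}"

lemma descent_window_zero:
  assumes "0 \<le> q" shows "descent_window q 0"
proof -
  have "\<forall>r i. q - 0 \<le> r \<and> r \<le> q \<longrightarrow> \<sigma> q i - c q \<le> \<sigma> r i"
  proof (intro allI impI)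
    fix r i assume "q - 0 \<le> r \<and> r \<le> q"
    then have "r = q" by linarith
    then show "\<sigma> q i - c q \<le> \<sigma> r i" using c_nonneg[OF assms] by simp
  qed
  then show ?thesis unfolding descent_window_def using assms by blast
qed

lemma bdd_above_descent_window: "bdd_above {h. descent_window q h}"
  by (rule bdd_aboveI[where M=q]) (auto simp: descent_window_def)

lemma descent_window_le_max: "descent_window q h \<Longrightarrow> h \<le> max_descent_window q"
  unfolding max_descent_window_def by (rule cSup_upper) (auto intro: bdd_above_descent_window)

lemma max_descent_window_nonneg: "0 \<le> q \<Longrightarrow> 0 \<le> max_descent_window q"
  using descent_window_le_max descent_window_zero by auto

lemma max_descent_window_le: "0 \<le> q \<Longrightarrow> max_descent_window q \<le> q"
  unfolding max_descent_window_def
  using descent_window_zero by (intro cSup_least) (auto simp: descent_window_def)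

lemma exists_descent_window_gt:
  assumes "0 \<le> q" "h < max_descent_window q" shows "\<exists>h'>h. descent_window q h'"
proof -
  have "{h. descent_window q h} \<noteq> {}" using descent_window_zero[OF assms(1)] by blast
  from less_cSup_iff[OF this bdd_above_descent_window] assms(2) show ?thesis
    unfolding max_descent_window_def by auto
qed

lemma max_descent_window_locally_pos:
  assumes r: "0 < r"
  shows "\<exists>\<epsilon>>0. \<forall>q. \<bar>q - r\<bar> < \<epsilon> \<longrightarrow> \<epsilon> \<le> max_descent_window q"
proof -
  define c0 where "c0 = c (r/2)"
  have c0: "0 < c0" unfolding c0_def using c_pos r by auto
  obtain \<delta> where d: "\<delta> > 0"
    and close: "\<And>x. 0 \<le> x \<Longrightarrow> \<bar>x - r\<bar> < \<delta> \<Longrightarrow> nrm (\<lambda>i. \<sigma> x i - \<sigma> r i) < c0/2"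
  proof -
    have "0 \<le> r" "0 < c0/2" using r c0 by auto
    then show ?thesis using path_continuous that by blast
  qed
  define e where "e = min \<delta> (r/2) / 2"
  have e: "0 < e" "e \<le> \<delta>/2" "e \<le> r/4" unfolding e_def using d r by auto
  have "e \<le> max_descent_window q" if q: "\<bar>q - r\<bar> < e" for q
  proof (rule descent_window_le_max)
    have qpos: "r/2 \<le> q" "e \<le> q" using q e unfolding abs_less_iff by linarith+
    have "\<sigma> q i - c q \<le> \<sigma> r' i" if r': "q - e \<le> r'" "r' \<le> q" for r' i
    proof -
      have r'0: "0 \<le> r'" and q0: "0 \<le> q" using r' qpos r by linarith+
      have "\<bar>r' - r\<bar> < \<delta>" "\<bar>q - r\<bar> < \<delta>" using r' q e d unfolding abs_less_iff by linarith+
      then have n1: "nrm (\<lambda>i. \<sigma> q i - \<sigma> r i) < c0/2" and n2: "nrm (\<lambda>i. \<sigma> r i - \<sigma> r' i) < c0/2"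
        using close r'0 q0 nrm_diff_commute[of "\<sigma> r" "\<sigma> r'"] by auto
      have b: "bounded_fun (\<sigma> q)" "bounded_fun (\<sigma> r)" "bounded_fun (\<sigma> r')"
        using path_bounded r'0 q0 r by auto
      have "\<sigma> q i - \<sigma> r' i \<le> nrm (\<lambda>i. \<sigma> q i - \<sigma> r' i)"
        using abs_le_nrm[OF bounded_fun_diff[OF b(1,3)], of i] by auto
      also have "\<dots> \<le> nrm (\<lambda>i. \<sigma> q i - \<sigma> r i) + nrm (\<lambda>i. \<sigma> r i - \<sigma> r' i)"
        by (rule nrm_diff_triangle[OF b])
      also have "\<dots> < c0" using n1 n2 by linarith
      also have "\<dots> \<le> c q"
        unfolding c0_def using qpos r by (intro mono_onD[OF c_mono]) auto
      finally show ?thesis by simp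
    qed
    then show "descent_window q e" unfolding descent_window_def using e qpos by simp
  qed
  then show ?thesis using e by blast
qed

definition descent_minorant :: "real \<Rightarrow> real" where
  "descent_minorant r = (INF q\<in>{0<..}. max_descent_window q + \<bar>r - q\<bar>)"

lemma descent_minorant_le: "0 < q \<Longrightarrow> descent_minorant r \<le> max_descent_window q + \<bar>r - q\<bar>"
  unfolding descent_minorant_def
  by (rule cINF_lower[OF bdd_belowI2[where m=0]])
     (auto intro!: add_nonneg_nonneg max_descent_window_nonneg)

lemma descent_minorant_greatest:
  "(\<And>q. 0 < q \<Longrightarrow> m \<le> max_descent_window q + \<bar>r - q\<bar>) \<Longrightarrow> m \<le> descent_minorant r"
  unfolding descent_minorant_def by (rule cINF_greatest) auto

lemma descent_minorant_nonneg: "0 \<le> descent_minorant r"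
  by (rule descent_minorant_greatest) (auto intro!: add_nonneg_nonneg max_descent_window_nonneg)

lemma descent_minorant_lipschitz: "descent_minorant r \<le> descent_minorant r' + \<bar>r - r'\<bar>"
proof -
  have "descent_minorant r - \<bar>r - r'\<bar> \<le> descent_minorant r'"
  proof (rule descent_minorant_greatest)
    fix q :: real assume "0 < q"
    then show "descent_minorant r - \<bar>r - r'\<bar> \<le> max_descent_window q + \<bar>r' - q\<bar>"
      using descent_minorant_le[of q r] by linarith
  qed
  then show ?thesis by simp
qed

lemma descent_minorant_zero: "descent_minorant 0 = 0"
proof -
  have "descent_minorant 0 \<le> 0 + e" if "0 < e" for e
    using descent_minorant_le[of "e/2" 0] max_descent_window_le[of "e/2"] that by simp
  then have "descent_minorant 0 \<le> 0" by (rule field_le_epsilon)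
  then show ?thesis using descent_minorant_nonneg[of 0] by linarith
qed

lemma descent_minorant_pos:
  assumes r: "0 < r" shows "0 < descent_minorant r"
proof -
  obtain e where e: "e > 0" and near: "\<And>q. \<bar>q - r\<bar> < e \<Longrightarrow> e \<le> max_descent_window q"
    using max_descent_window_locally_pos[OF r] by blast
  have "e \<le> descent_minorant r"
  proof (rule descent_minorant_greatest)
    fix q :: real assume "0 < q"
    then show "e \<le> max_descent_window q + \<bar>r - q\<bar>"
      using near[of q] max_descent_window_nonneg[of q] by (cases "\<bar>q - r\<bar> < e") simp_all
  qed
  then show ?thesis using e by simp
qed

lemma descent_minorant_le_window: "0 < r \<Longrightarrow> descent_minorant r \<le> max_descent_window r"
  using descent_minorant_le[of r r] by simp

lemma descent_minorant_le_id: "0 \<le> r \<Longrightarrow> descent_minorant r \<le> r"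
  using descent_minorant_le_window[of r] max_descent_window_le[of r] descent_minorant_zero
  by (cases "r = 0") simp_all

text \<open>The rate is r - descent_minorant r / 2: the minorant is 1-Lipschitz, which makes the rate
  continuous and strictly increasing, and it stays below the window length.\<close>
lemma exists_contraction_rate:
  "\<exists>\<alpha>. classK \<alpha> \<and> (\<forall>r>0. \<alpha> r < r) \<and> (\<forall>r\<ge>0. r \<le> 2 * \<alpha> r)
      \<and> (\<forall>r\<ge>0. \<forall>i. \<sigma> r i - c r \<le> \<sigma> (\<alpha> r) i)"
proof (intro exI conjI allI impI)
  define \<alpha> where "\<alpha> r = r - descent_minorant r / 2" for r
  have "1-lipschitz_on UNIV descent_minorant"
  proof (rule lipschitz_onI)
    fix x y :: real
    show "dist (descent_minorant x) (descent_minorant y) \<le> 1 * dist x y"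
      using descent_minorant_lipschitz[of x y] descent_minorant_lipschitz[of y x]
      unfolding dist_real_def by (simp add: abs_minus_commute)
  qed simp
  then have "continuous_on {0..} descent_minorant"
    by (rule continuous_on_subset[OF lipschitz_on_continuous_on]) simp
  then have "continuous_on {0..} \<alpha>" unfolding \<alpha>_def[abs_def] by (intro continuous_intros) auto
  moreover have "strict_mono_on {0..} \<alpha>"
  proof (rule strict_mono_onI)
    fix x y :: real assume "x < y"
    then show "\<alpha> x < \<alpha> y"
      using descent_minorant_lipschitz[of y x] unfolding \<alpha>_def by simp
  qed
  ultimately show "classK \<alpha>" unfolding classK_def \<alpha>_def by (simp add: descent_minorant_zero)
  show "\<alpha> r < r" if "0 < r" for r
    using descent_minorant_pos[OF that] unfolding \<alpha>_def by simp
  show "r \<le> 2 * \<alpha> r" if "0 \<le> r" for r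
    using descent_minorant_le_id[OF that] unfolding \<alpha>_def by simp
  show "\<sigma> r i - c r \<le> \<sigma> (\<alpha> r) i" if r: "0 \<le> r" for r i
  proof (cases "r = 0")
    case True
    then show ?thesis using c_nonneg[of 0] by (simp add: \<alpha>_def descent_minorant_zero)
  next
    case False
    then have "0 < r" using r by simp
    then have "descent_minorant r / 2 < max_descent_window r"
      using descent_minorant_pos descent_minorant_le_window by fastforce
    then obtain h where "h > descent_minorant r / 2" "descent_window r h"
      using exists_descent_window_gt[OF r] by blast
    then show ?thesis
      unfolding descent_window_def \<alpha>_def using descent_minorant_nonneg[of r] by simp
  qed
qed

end

section \<open>Comparison along a contracted path\<close>

locale path_contraction =
  fixes T :: "('i \<Rightarrow> real) \<Rightarrow> 'i \<Rightarrow> real"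
    and \<sigma> :: "real \<Rightarrow> 'i \<Rightarrow> real"
    and \<alpha> \<phi>min \<phi>max :: "real \<Rightarrow> real"
  assumes T_nonneg: "linf s \<Longrightarrow> 0 \<le> T s i"
    and T_mono: "linf s \<Longrightarrow> linf s' \<Longrightarrow> (\<And>j. s j \<le> s' j) \<Longrightarrow> T s i \<le> T s' i"
    and path_lower: "0 \<le> r \<Longrightarrow> \<phi>min r \<le> \<sigma> r i"
    and path_upper: "0 \<le> r \<Longrightarrow> \<sigma> r i \<le> \<phi>max r"
    and path_step: "0 \<le> r \<Longrightarrow> T (\<sigma> r) i \<le> \<sigma> (\<alpha> r) i"
    and rate_K: "classK \<alpha>"
    and rate_less: "0 < r \<Longrightarrow> \<alpha> r < r"
    and rate_half: "0 \<le> r \<Longrightarrow> r \<le> 2 * \<alpha> r"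
    and lower_Kinf: "classKinf \<phi>min"
    and upper_Kinf: "classKinf \<phi>max"
begin

lemma below_path_linf:
  assumes "0 \<le> r" "\<And>i. 0 \<le> s i" "\<And>i. s i \<le> \<sigma> r i" shows "linf s"
  using assms order_trans[OF assms(3) path_upper[OF assms(1)]] by (intro linfI) auto

lemma path_linf:
  assumes "0 \<le> r" shows "linf (\<sigma> r)"
proof (rule below_path_linf[OF assms])
  show "0 \<le> \<sigma> r i" for i
    using classK_nonneg[OF classKinf_classK[OF lower_Kinf] assms] path_lower[OF assms] by (rule order_trans)
qed simp

lemma nrm_le_path_upper:
  assumes "linf s" "0 \<le> r" "\<And>i. s i \<le> \<sigma> r i" shows "nrm s \<le> \<phi>max r"
  using assms(1) order_trans[OF assms(3) path_upper[OF assms(2)]]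
  by (intro nrm_le_bound linf_nonneg)

lemma T_below_path:
  assumes s: "linf s" and r: "0 \<le> r" and below: "\<And>i. s i \<le> \<sigma> r i"
  shows "T s i \<le> \<sigma> (\<alpha> r) i"
  using T_mono[OF s path_linf[OF r] below] path_step[OF r] by (rule order_trans)

lemma iterate_below_path:
  assumes s: "linf s" and r: "0 \<le> r" and below: "\<And>i. s i \<le> \<sigma> r i"
  shows "linf ((T^^n) s) \<and> (\<forall>i. (T^^n) s i \<le> \<sigma> ((\<alpha>^^n) r) i)"
proof (induction n)
  case (Suc n)
  have r': "0 \<le> (\<alpha>^^n) r" by (rule funpow_contraction_nonneg[OF rate_K rate_less r])
  have below': "(T^^Suc n) s i \<le> \<sigma> ((\<alpha>^^Suc n) r) i" for i
    using T_below_path[OF _ r'] Suc by simp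
  have "linf ((T^^Suc n) s)"
  proof (rule below_path_linf[OF _ _ below'])
    show "0 \<le> (\<alpha>^^Suc n) r" using classK_nonneg[OF rate_K r'] by simp
    show "0 \<le> (T^^Suc n) s i" for i using T_nonneg Suc by simp
  qed
  with below' show ?case by blast
qed (use s below in simp)

lemma below_path_Kinv_nrm:
  assumes s: "linf s" shows "s i \<le> \<sigma> (Kinv \<phi>min (nrm s)) i"
proof -
  note Kinv_nrm = Kinv[OF lower_Kinf nrm_nonneg[OF linf_bounded_fun[OF s]]]
  have "s i \<le> \<phi>min (Kinv \<phi>min (nrm s))" using linf_le_nrm[OF s, of i] Kinv_nrm(2) by simp
  also have "\<dots> \<le> \<sigma> (Kinv \<phi>min (nrm s)) i" by (rule path_lower[OF Kinv_nrm(1)])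
  finally show ?thesis .
qed

lemma UGAS: "UGAS T"
  unfolding UGAS_def
proof (intro exI conjI allI impI)
  show "classKL (\<lambda>r t. \<phi>max (iter_interp \<alpha> (Kinv \<phi>min r) t))"
    by (rule classKL_compose[OF classKinf_classK[OF upper_Kinf] classKL_iter_interp[OF rate_K rate_less]
          classKinf_classK[OF classKinf_Kinv[OF lower_Kinf]]])
  fix s :: "'i \<Rightarrow> real" and n :: nat assume s: "linf s"
  define p where "p = Kinv \<phi>min (nrm s)"
  have p: "0 \<le> p" unfolding p_def by (rule Kinv(1)[OF lower_Kinf nrm_nonneg[OF linf_bounded_fun[OF s]]])
  have "linf ((T^^n) s) \<and> (\<forall>i. (T^^n) s i \<le> \<sigma> ((\<alpha>^^n) p) i)"
    using iterate_below_path[OF s p] below_path_Kinv_nrm[OF s] unfolding p_def by blast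
  then have "nrm ((T^^n) s) \<le> \<phi>max ((\<alpha>^^n) p)"
    using nrm_le_path_upper funpow_contraction_nonneg[OF rate_K rate_less p] by blast
  then show "nrm ((T^^n) s) \<le> \<phi>max (iter_interp \<alpha> (Kinv \<phi>min (nrm s)) (real n))"
    unfolding iter_interp_of_nat p_def .
qed

lemma nrm_le_until_level:
  assumes s: "linf s"
    and persist: "\<And>r i. 0 \<le> r \<Longrightarrow> (\<And>i. s i \<le> \<sigma> r i) \<Longrightarrow> R \<le> \<alpha> r \<Longrightarrow> s i \<le> \<sigma> (\<alpha> r) i"
    and r: "0 \<le> r" and below: "\<And>i. s i \<le> \<sigma> r i"
  shows "nrm s \<le> \<phi>max (max (2 * R) ((\<alpha>^^n) r))"
  using r below
proof (induction n arbitrary: r)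
  case 0
  have "\<phi>max r \<le> \<phi>max (max (2 * R) r)"
    using classK_mono[OF classKinf_classK[OF upper_Kinf] 0(1)] by simp
  then show ?case using nrm_le_path_upper[OF s 0(1,2)] by simp
next
  case (Suc n)
  note r = Suc.prems(1) and below = Suc.prems(2)
  show ?case
  proof (cases "R \<le> \<alpha> r")
    case True
    then have "nrm s \<le> \<phi>max (max (2 * R) ((\<alpha>^^n) (\<alpha> r)))"
      using Suc.IH[OF classK_nonneg[OF rate_K r]] persist[OF r below] by blast
    then show ?thesis by (simp add: funpow_Suc_right del: funpow.simps)
  next
    case False
    then have "r \<le> max (2 * R) ((\<alpha>^^Suc n) r)" using rate_half[OF r] by simp
    then have "\<phi>max r \<le> \<phi>max (max (2 * R) ((\<alpha>^^Suc n) r))"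
      by (rule classK_mono[OF classKinf_classK[OF upper_Kinf] r])
    then show ?thesis using nrm_le_path_upper[OF s r below] by simp
  qed
qed

lemma MBI: "MBI T"
  unfolding MBI_def
proof (intro exI conjI allI impI)
  have "classKinf (\<lambda>x::real. 2 * x)" using classKinf_cmult[of 2 "\<lambda>x. x"] classKinf_id by simp
  then show "classKinf (\<phi>max \<circ> (\<lambda>x. 2 * x) \<circ> Kinv \<phi>min)"
    by (rule classKinf_compose[OF classKinf_compose[OF upper_Kinf] classKinf_Kinv[OF lower_Kinf]])
  fix s b :: "'i \<Rightarrow> real"
  assume "linf s \<and> linf b \<and> (\<forall>i. s i \<le> max (b i) (T s i))"
  then have s: "linf s" and b: "linf b" and ineq: "\<And>i. s i \<le> max (b i) (T s i)" by auto
  define R where "R = Kinv \<phi>min (nrm b)"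
  note R = Kinv[OF lower_Kinf nrm_nonneg[OF linf_bounded_fun[OF b]], folded R_def]
  \<comment> \<open>Above level R the input b cannot stop the descent along the path.\<close>
  have persist: "s i \<le> \<sigma> (\<alpha> r) i"
    if r: "0 \<le> r" and below: "\<And>i. s i \<le> \<sigma> r i" and "R \<le> \<alpha> r" for r i
  proof -
    have "b i \<le> \<phi>min R" using linf_le_nrm[OF b] R(2) by simp
    also have "\<dots> \<le> \<phi>min (\<alpha> r)" using classK_mono[OF classKinf_classK[OF lower_Kinf] R(1)] that by simp
    also have "\<dots> \<le> \<sigma> (\<alpha> r) i" by (rule path_lower[OF classK_nonneg[OF rate_K r]])
    finally show ?thesis using ineq[of i] T_below_path[OF s r below, of i] by linarith
  qed
  define p where "p = Kinv \<phi>min (nrm s)"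
  have p: "0 \<le> p" unfolding p_def by (rule Kinv(1)[OF lower_Kinf nrm_nonneg[OF linf_bounded_fun[OF s]]])
  have "(\<lambda>n. \<phi>max (max (2 * R) ((\<alpha>^^n) p))) \<longlonglongrightarrow> \<phi>max (max (2 * R) 0)"
    by (intro continuous_on_tendsto_compose[OF classK_continuous_on[OF classKinf_classK[OF upper_Kinf]]]
        tendsto_max tendsto_const funpow_contraction_tendsto_zero[OF rate_K rate_less p])
       (use R(1) in \<open>auto intro: always_eventually\<close>)
  then have "nrm s \<le> \<phi>max (max (2 * R) 0)"
    using nrm_le_until_level[OF s persist p below_path_Kinv_nrm[OF s, folded p_def]]
    by (intro LIMSEQ_le_const) auto
  then show "nrm s \<le> (\<phi>max \<circ> (\<lambda>x. 2 * x) \<circ> Kinv \<phi>min) (nrm b)"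
    using R(1) unfolding R_def by simp
qed

end

section \<open>Gain operators\<close>

text \<open>If g \<le> a/4 the cap by the identity gives the decrease a/2; otherwise half of
  \<rho> g \<ge> \<rho> (a/4) is left over.\<close>
lemma add_min_half_margin_le:
  fixes \<rho> :: "real \<Rightarrow> real"
  assumes \<rho>: "classK \<rho>" and g: "0 \<le> g" and a: "0 \<le> a" "a \<le> x" and margin: "g + \<rho> g \<le> x"
  shows "g + min (\<rho> g / 2) g \<le> x - min (a / 2) (\<rho> (a / 4) / 2)"
proof (cases "g \<le> a / 4")
  case True
  then show ?thesis using a by linarith
next
  case False
  then have "\<rho> (a / 4) \<le> \<rho> g" using classK_mono[OF \<rho>] a by simp
  then show ?thesis using margin by linarith
qed

context
  fixes Isub :: "'i \<Rightarrow> 'i set" and gam :: "'i \<Rightarrow> 'i \<Rightarrow> real \<Rightarrow> real"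
    and mu :: "'i \<Rightarrow> ('i \<Rightarrow> real) \<Rightarrow> ereal"
  assumes gain: "gain_operator Isub gam mu"
begin

lemma gain_operator_finite: "finite (Isub i)"
proof -
  from gain have "\<forall>i. finite (Isub i) \<and> i \<notin> Isub i"
    unfolding gain_operator_def by (elim conjE) assumption
  then show ?thesis by simp
qed

lemma gain_operator_classK: "j \<in> Isub i \<Longrightarrow> classK (gam i j)"
proof -
  from gain have "\<forall>i. \<forall>j\<in>Isub i. classKinf (gam i j)"
    unfolding gain_operator_def by (elim conjE) assumption
  then show "j \<in> Isub i \<Longrightarrow> classK (gam i j)" by (simp add: classKinf_classK)
qed

lemma gain_operator_mu_nonneg: "linf s \<Longrightarrow> 0 \<le> mu i s"
proof -
  from gain have "\<forall>i s. linf s \<longrightarrow> 0 \<le> mu i s"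
    unfolding gain_operator_def by (elim conjE) assumption
  then show "linf s \<Longrightarrow> 0 \<le> mu i s" by simp
qed

lemma gain_operator_mu_mono:
  assumes "linf s" "linf s'" "\<And>j. s j \<le> s' j" shows "mu i s \<le> mu i s'"
proof -
  from gain have "\<forall>i s s'. linf s \<and> linf s' \<and> (\<forall>j. s j \<le> s' j) \<longrightarrow> mu i s \<le> mu i s'"
    unfolding gain_operator_def by (elim conjE) assumption
  then show ?thesis using assms by simp
qed

lemma gain_operator_mu_finite:
  assumes "finite J" "linf s" "\<And>j. j \<notin> J \<Longrightarrow> s j = 0" shows "mu i s \<noteq> \<infinity>"
proof -
  from gain have "\<forall>i J. finite J \<longrightarrow> (\<forall>s. linf s \<and> (\<forall>j. j \<notin> J \<longrightarrow> s j = 0) \<longrightarrow> mu i s \<noteq> \<infinity>)"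
    unfolding gain_operator_def imp_conjR all_conj_distrib by (elim conjE) assumption
  then show ?thesis using assms by simp
qed

lemma gain_operator_arg_linf:
  assumes s: "linf s" shows "linf (\<lambda>j. if j \<in> Isub i then gam i j (s j) else 0)"
proof (rule linfI)
  have nonneg: "0 \<le> gam i j (s j)" if "j \<in> Isub i" for j
    using classK_nonneg[OF gain_operator_classK[OF that] linf_nonneg[OF s]] .
  show "0 \<le> (if j \<in> Isub i then gam i j (s j) else 0)" for j using nonneg by simp
  show "(if j \<in> Isub i then gam i j (s j) else 0) \<le> (\<Sum>k\<in>Isub i. gam i k (s k))" for j
    using member_le_sum[of j "Isub i" "\<lambda>k. gam i k (s k)"] nonneg gain_operator_finite
    by (simp add: sum_nonneg)
qed

lemma gain_operator_Gamma_nonneg: "linf s \<Longrightarrow> 0 \<le> Gamma Isub gam mu s i"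
  unfolding Gamma_def by (intro real_of_ereal_pos gain_operator_mu_nonneg gain_operator_arg_linf)

lemma gain_operator_Gamma_mono:
  assumes s: "linf s" and s': "linf s'" and le: "\<And>j. s j \<le> s' j"
  shows "Gamma Isub gam mu s i \<le> Gamma Isub gam mu s' i"
proof -
  define arg where "arg t = (\<lambda>j. if j \<in> Isub i then gam i j (t j) else 0)" for t :: "'i \<Rightarrow> real"
  have lin: "linf (arg s)" "linf (arg s')"
    unfolding arg_def using gain_operator_arg_linf s s' by blast+
  have "arg s j \<le> arg s' j" for j
    unfolding arg_def using classK_mono[OF gain_operator_classK linf_nonneg[OF s] le] by simp
  then have "mu i (arg s) \<le> mu i (arg s')" by (rule gain_operator_mu_mono[OF lin])
  moreover have "mu i (arg s') \<noteq> \<infinity>"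
    using gain_operator_mu_finite[OF gain_operator_finite[of i] lin(2)] by (simp add: arg_def)
  ultimately show ?thesis
    unfolding Gamma_def arg_def[symmetric]
    by (intro real_of_ereal_positive_mono gain_operator_mu_nonneg lin)
qed

lemma gain_operator_Gamma_rho_half_margin_decay:
  assumes \<rho>: "classK \<rho>" and x: "linf x" and a: "0 \<le> a" "\<And>i. a \<le> x i"
    and margin: "\<And>i. Gamma_rho \<rho> Isub gam mu x i \<le> x i"
  shows "Gamma_rho (\<lambda>y. min (\<rho> y / 2) y) Isub gam mu x i \<le> x i - min (a / 2) (\<rho> (a / 4) / 2)"
proof -
  have "Gamma Isub gam mu x i + min (\<rho> (Gamma Isub gam mu x i) / 2) (Gamma Isub gam mu x i)
      \<le> x i - min (a / 2) (\<rho> (a / 4) / 2)"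
    by (rule add_min_half_margin_le[OF \<rho> gain_operator_Gamma_nonneg[OF x] a(1) a(2)
          margin[unfolded Gamma_rho_def]])
  then show ?thesis unfolding Gamma_rho_def .
qed

lemma gain_operator_Gamma_rho_nonneg: "classK \<rho> \<Longrightarrow> linf s \<Longrightarrow> 0 \<le> Gamma_rho \<rho> Isub gam mu s i"
  unfolding Gamma_rho_def using gain_operator_Gamma_nonneg classK_nonneg by simp

lemma gain_operator_Gamma_rho_mono:
  assumes "classK \<rho>" "linf s" "linf s'" "\<And>j. s j \<le> s' j"
  shows "Gamma_rho \<rho> Isub gam mu s i \<le> Gamma_rho \<rho> Isub gam mu s' i"
  unfolding Gamma_rho_def using gain_operator_Gamma_mono[OF assms(2-4)]
  by (intro add_mono classK_mono[OF assms(1)] gain_operator_Gamma_nonneg assms(2))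

end

theorem theorem3p7:
  fixes Isub :: "'i::countable \<Rightarrow> 'i set"
    and gam :: "'i \<Rightarrow> 'i \<Rightarrow> real \<Rightarrow> real"
    and mu :: "'i \<Rightarrow> ('i \<Rightarrow> real) \<Rightarrow> ereal"
    and \<sigma> :: "real \<Rightarrow> 'i \<Rightarrow> real"
    and \<rho>t \<phi>min \<phi>max :: "real \<Rightarrow> real"
  assumes gain: "gain_operator Isub gam mu"
    and sigma_in: "\<forall>r\<ge>0. linf (\<sigma> r)"
    and sigma_cont: "\<forall>r\<ge>0. \<forall>\<epsilon>>0. \<exists>\<delta>>0. \<forall>r'\<ge>0.
                       \<bar>r' - r\<bar> < \<delta> \<longrightarrow> nrm (\<lambda>i. \<sigma> r' i - \<sigma> r i) < \<epsilon>"
    and rho_t: "classKinf \<rho>t"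
    and decay: "\<forall>r\<ge>0. \<forall>i. Gamma_rho \<rho>t Isub gam mu (\<sigma> r) i \<le> \<sigma> r i"
    and phimin: "classKinf \<phi>min" and phimax: "classKinf \<phi>max"
    and bounds: "\<forall>r\<ge>0. \<forall>i. \<phi>min r \<le> \<sigma> r i \<and> \<sigma> r i \<le> \<phi>max r"
  shows "\<exists>\<rho>. classKinf \<rho> \<and> UGAS (Gamma_rho \<rho> Isub gam mu)
              \<and> MBI (Gamma_rho \<rho> Isub gam mu)"
proof -
  define \<rho> where "\<rho> x = min (\<rho>t x / 2) x" for x
  define c where "c r = min (\<phi>min r / 2) (\<rho>t (\<phi>min r / 4) / 2)" for r
  note \<rho>tK = classKinf_classK[OF rho_t] and \<phi>minK = classKinf_classK[OF phimin]
  have \<rho>: "classKinf \<rho>"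
    using classKinf_min[OF classKinf_cmult[of "1/2", OF _ rho_t] classKinf_id] unfolding \<rho>_def by simp
  have strict_decay: "Gamma_rho \<rho> Isub gam mu (\<sigma> r) i \<le> \<sigma> r i - c r" if r: "0 \<le> r" for r i
    unfolding \<rho>_def[abs_def] c_def
    by (rule gain_operator_Gamma_rho_half_margin_decay[OF gain \<rho>tK sigma_in[rule_format, OF r]
          classK_nonneg[OF \<phi>minK r] bounds[rule_format, OF r, THEN conjunct1] decay[rule_format, OF r]])
  have "mono_on {0..} c"
    unfolding c_def by (intro mono_onI min.mono divide_right_mono classK_mono[OF \<rho>tK]
        classK_mono[OF \<phi>minK]) (auto intro: classK_nonneg[OF \<phi>minK])
  moreover have "0 \<le> c r" if "0 \<le> r" for r
    unfolding c_def using classK_nonneg[OF \<phi>minK that] classK_nonneg[OF \<rho>tK] by simp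
  moreover have "0 < c r" if "0 < r" for r
    unfolding c_def using classK_pos[OF \<phi>minK that] classK_pos[OF \<rho>tK] by simp
  ultimately obtain \<alpha> where \<alpha>: "classK \<alpha>" "\<forall>r>0. \<alpha> r < r" "\<forall>r\<ge>0. r \<le> 2 * \<alpha> r"
      "\<forall>r\<ge>0. \<forall>i. \<sigma> r i - c r \<le> \<sigma> (\<alpha> r) i"
    using exists_contraction_rate[of \<sigma> c] linf_bounded_fun sigma_in sigma_cont by blast
  interpret path_contraction "Gamma_rho \<rho> Isub gam mu" \<sigma> \<alpha> \<phi>min \<phi>max
  proof unfold_locales
    show "Gamma_rho \<rho> Isub gam mu (\<sigma> r) i \<le> \<sigma> (\<alpha> r) i" if "0 \<le> r" for r i
      using strict_decay[OF that, of i] \<alpha>(4) that by (meson order_trans)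
  qed (use gain_operator_Gamma_rho_nonneg[OF gain] gain_operator_Gamma_rho_mono[OF gain]
      classKinf_classK[OF \<rho>] \<alpha> bounds phimin phimax in simp_all)
  show ?thesis using \<rho> UGAS MBI by blast
qed

end
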